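(* Let $\alpha,\beta,r>0$, $\mu=2\beta r/\alpha$, and let $q(x)=\frac{\alpha}{2\beta}\big(1+\mathbf{W}(-e^{-\mu x-1})\big)$ for $x\ge0$, where $\mathbf{W}$ is the principal-branch Lambert $W$ function (equivalently $q(x)=(\alpha-v_M'(x))/(2\beta)$ with $v_M(x)=\frac{\alpha^2}{4\beta r}[\mathbf{W}(-e^{-\mu x-1})+1]^2$). Consider, for $i=1,2$, the first-order PDE problem $$q(x_1)\frac{\partial v}{\partial x_1}+q(x_2)\frac{\partial v}{\partial x_2}+rv=-q(x_1)q(x_2),\quad x_1,x_2>0,\qquad v(x_1,0)=v(0,x_2)=0.$$ Its solution $v_1^{(1)}$ is given, for $x_1>x_2$, by $$v^{(1)}_1(x_1,x_2)=\frac{\alpha^2}{4\beta^2r}\Big(e^{-rQ(x_2)}\big(1+rQ(x_2)\big)-e^{-rQ(x_1)}\big(1-rQ(x_2)\big)+e^{-r(Q(x_1)+Q(x_2))}-1\Big),$$ where $$Q(x)=\int_0^x\frac{du}{q(u)}=-\frac1r\log\Big(-\mathbf{W}\big(-e^{-\mu x-1}\big)\Big),$$ and, for $x_2\ge x_1$, by the same formula with the roles of $x_1$ and $x_2$ interchanged. The solution $v_2^{(1)}$ of the same problem coincides: $v_2^{(1)}\equiv v_1^{(1)}$.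
   Context: This PDE arises as the first-order term $v_i^{(1)}$ in the expansion $V_i=v_M(x_i)+\gamma v_i^{(1)}+\gamma^2v_i^{(2)}+\cdots$ of the value functions of a deterministic linear-demand Bertrand duopoly in the degree of substitutability $\gamma$. *)

theory Defs
  imports "HOL-Analysis.Analysis"
begin

text \<open>Principal branch of the Lambert W function on [-1/e, \<infinity>):
  the unique w \<ge> -1 with w * exp w = y.\<close>
definition lambertW :: "real \<Rightarrow> real" where
  "lambertW y = (THE w. -1 \<le> w \<and> w * exp w = y)"

definition mu :: "real \<Rightarrow> real \<Rightarrow> real \<Rightarrow> real" where
  "mu \<alpha> \<beta> r = 2 * \<beta> * r / \<alpha>"

definition qfun :: "real \<Rightarrow> real \<Rightarrow> real \<Rightarrow> real \<Rightarrow> real" where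
  "qfun \<alpha> \<beta> r x = \<alpha> / (2 * \<beta>) * (1 + lambertW (- exp (- mu \<alpha> \<beta> r * x - 1)))"

definition vM :: "real \<Rightarrow> real \<Rightarrow> real \<Rightarrow> real \<Rightarrow> real" where
  "vM \<alpha> \<beta> r x = \<alpha>^2 / (4 * \<beta> * r) * (lambertW (- exp (- mu \<alpha> \<beta> r * x - 1)) + 1)^2"

definition Qfun :: "real \<Rightarrow> real \<Rightarrow> real \<Rightarrow> real \<Rightarrow> real" where
  "Qfun \<alpha> \<beta> r x = - (1 / r) * ln (- lambertW (- exp (- mu \<alpha> \<beta> r * x - 1)))"

definition v1_branch :: "real \<Rightarrow> real \<Rightarrow> real \<Rightarrow> real \<Rightarrow> real \<Rightarrow> real" where
  "v1_branch \<alpha> \<beta> r a b =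
     \<alpha>^2 / (4 * \<beta>^2 * r) *
       (exp (- r * b) * (1 + r * b) - exp (- r * a) * (1 - r * b) + exp (- r * (a + b)) - 1)"

definition v1_formula :: "real \<Rightarrow> real \<Rightarrow> real \<Rightarrow> real \<times> real \<Rightarrow> real" where
  "v1_formula \<alpha> \<beta> r p =
     (case p of (x1, x2) \<Rightarrow>
        if x1 > x2 then v1_branch \<alpha> \<beta> r (Qfun \<alpha> \<beta> r x1) (Qfun \<alpha> \<beta> r x2)
        else v1_branch \<alpha> \<beta> r (Qfun \<alpha> \<beta> r x2) (Qfun \<alpha> \<beta> r x1))"

definition solves_pde :: "(real \<Rightarrow> real) \<Rightarrow> real \<Rightarrow> (real \<times> real \<Rightarrow> real) \<Rightarrow> bool" where
  "solves_pde q r v \<longleftrightarrow>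
     continuous_on {p. 0 \<le> fst p \<and> 0 \<le> snd p} v \<and>
     (\<forall>x1 x2. 0 < x1 \<longrightarrow> 0 < x2 \<longrightarrow>
        (\<exists>D. (v has_derivative D) (at (x1, x2)) \<and>
             q x1 * D (1, 0) + q x2 * D (0, 1) + r * v (x1, x2) = - q x1 * q x2)) \<and>
     (\<forall>x1\<ge>0. v (x1, 0) = 0) \<and> (\<forall>x2\<ge>0. v (0, x2) = 0)"

end

theory Submission
  imports Defs
begin

(* The characteristics of the PDE are the curves along which both coordinates move with
   speed q; in the time s = Q(x) they move with unit speed. Q is the inverse of the explicit map
   Qinv(s) = (r s + exp(-r s) - 1) / mu, since W(-exp(-mu Qinv(s) - 1)) = -exp(-r s); this is
   the only place where the Lambert W function enters, and it gives
   q(x) = alpha/(2 beta) (1 - exp(-r Q x)) and v_M = (beta/r) q^2.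
   In the coordinates (a, b) = (Q x1, Q x2) the PDE becomes B_a + B_b + r B = -qs(a) qs(b),
   which the explicit formula solves on each side of the diagonal; the two branches glue to a
   differentiable function because their partial derivatives agree on the diagonal.
   For uniqueness, the difference of two solutions along a characteristic satisfies
   u' = -r u and vanishes where the characteristic leaves the boundary of the quadrant. *)

lemma strict_mono_on_xexp: "strict_mono_on {-1..} (\<lambda>w::real. w * exp w)"
proof (rule strict_mono_onI)
  fix a b :: real
  assume "a \<in> {-1..}" "a < b"
  show "a * exp a < b * exp b"
  proof (rule DERIV_pos_imp_increasing_open[OF \<open>a < b\<close>])
    fix x assume "a < x" "x < b"
    with \<open>a \<in> {-1..}\<close> have "0 < (1 + x) * exp x" by simp
    then show "\<exists>y. ((\<lambda>w. w * exp w) has_real_derivative y) (at x) \<and> 0 < y"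
      by (intro exI[of _ "(1 + x) * exp x"]) (auto intro!: derivative_eq_intros simp: algebra_simps)
  qed (intro continuous_intros)
qed

lemma lambertW_xexp:
  fixes w :: real
  assumes "-1 \<le> w"
  shows "lambertW (w * exp w) = w"
  unfolding lambertW_def
proof (rule the_equality)
  fix w' assume "-1 \<le> w' \<and> w' * exp w' = w * exp w"
  then show "w' = w"
    using strict_mono_on_eqD[OF strict_mono_on_xexp, of w w'] assms by simp
qed (use assms in auto)

lemma linear_real_pair:
  fixes D :: "real \<times> real \<Rightarrow> real"
  assumes "linear D"
  shows "D (a, b) = a * D (1, 0) + b * D (0, 1)"
proof -
  have "D (a, b) = D (a *\<^sub>R (1, 0) + b *\<^sub>R (0, 1))" by simp
  also have "\<dots> = a *\<^sub>R D (1, 0) + b *\<^sub>R D (0, 1)"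
    by (simp only: linear_add[OF assms] linear_scale[OF assms])
  finally show ?thesis by simp
qed

lemma has_real_derivative_compose_pair:
  fixes v :: "real \<times> real \<Rightarrow> real"
  assumes "(v has_derivative D) (at (f t, g t))"
    and "(f has_real_derivative f') (at t)" and "(g has_real_derivative g') (at t)"
  shows "((\<lambda>t. v (f t, g t)) has_real_derivative f' * D (1, 0) + g' * D (0, 1)) (at t)"
proof -
  have "((\<lambda>t. (f t, g t)) has_derivative (\<lambda>h. (h * f', h * g'))) (at t)"
    using has_derivative_Pair[OF assms(2,3)[unfolded has_field_derivative_def]]
    by (simp add: mult.commute)
  from has_derivative_compose[OF this assms(1)]
  have "((\<lambda>t. v (f t, g t)) has_derivative (\<lambda>h. D (h * f', h * g'))) (at t)" .
  moreover have "(\<lambda>h. D (h * f', h * g')) = (*) (f' * D (1, 0) + g' * D (0, 1))"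
  proof
    fix h
    show "D (h * f', h * g') = (f' * D (1, 0) + g' * D (0, 1)) * h"
      using linear_real_pair[OF has_derivative_linear[OF assms(1)], of "h * f'" "h * g'"]
      by (simp add: algebra_simps)
  qed
  ultimately show ?thesis
    unfolding has_field_derivative_def by simp
qed

lemma linear_ode_zero:
  fixes f :: "real \<Rightarrow> real"
  assumes "a \<le> b" and "continuous_on {a..b} f" and "f a = 0"
    and "\<And>t. a < t \<Longrightarrow> t < b \<Longrightarrow> (f has_real_derivative c * f t) (at t)"
  shows "f b = 0"
proof (cases "a = b")
  case False
  have "exp (- c * b) * f b = exp (- c * a) * f a"
  proof (rule DERIV_isconst_end[where f = "\<lambda>t. exp (- c * t) * f t"])
    show "continuous_on {a..b} (\<lambda>t. exp (- c * t) * f t)"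
      using assms(2) by (intro continuous_intros)
    fix t assume "a < t" "t < b"
    with assms(4)[of t] show "((\<lambda>t. exp (- c * t) * f t) has_real_derivative 0) (at t)"
      by (auto intro!: derivative_eq_intros)
  qed (use assms False in auto)
  then show ?thesis using assms(3) by simp
qed (use assms in simp)

lemma continuous_on_atLeast:
  fixes f :: "real \<Rightarrow> 'a::topological_space"
  assumes "\<And>b. a \<le> b \<Longrightarrow> continuous_on {a..b} f"
  shows "continuous_on {a..} f"
  unfolding continuous_on_eq_continuous_within
proof
  fix x assume "x \<in> {a..}"
  then have "continuous (at x within {a..x + 1}) f"
    using assms[of "x + 1"] by (simp add: continuous_on_eq_continuous_within)
  moreover have "at x within {a..x + 1} = at x within {a..}"
    by (rule at_within_nhd[of x "{..<x + 1}"]) auto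
  ultimately show "continuous (at x within {a..}) f"
    by (simp add: continuous_within)
qed

locale bertrand_duopoly =
  fixes \<alpha> \<beta> r :: real
  assumes alpha_pos: "0 < \<alpha>" and beta_pos: "0 < \<beta>" and r_pos: "0 < r"
begin

abbreviation "q \<equiv> qfun \<alpha> \<beta> r"
abbreviation "Q \<equiv> Qfun \<alpha> \<beta> r"

definition Qinv :: "real \<Rightarrow> real" where
  "Qinv s = (r * s + exp (- r * s) - 1) / mu \<alpha> \<beta> r"

definition qs :: "real \<Rightarrow> real" where
  "qs s = \<alpha> / (2 * \<beta>) * (1 - exp (- r * s))"

lemma mu_pos: "0 < mu \<alpha> \<beta> r"
  using alpha_pos beta_pos r_pos by (simp add: mu_def)

lemma lambertW_Qinv:
  assumes "0 \<le> s"
  shows "lambertW (- exp (- mu \<alpha> \<beta> r * Qinv s - 1)) = - exp (- r * s)"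
proof -
  have "- mu \<alpha> \<beta> r * Qinv s - 1 = - exp (- r * s) + - r * s"
    using mu_pos by (simp add: Qinv_def field_simps)
  then have "- exp (- mu \<alpha> \<beta> r * Qinv s - 1) = - exp (- r * s) * exp (- exp (- r * s))"
    by (simp add: exp_add[symmetric])
  moreover have "-1 \<le> - exp (- r * s)"
    using r_pos assms by simp
  ultimately show ?thesis
    using lambertW_xexp[of "- exp (- r * s)"] by simp
qed

lemma Q_Qinv: "0 \<le> s \<Longrightarrow> Q (Qinv s) = s"
  unfolding Qfun_def using lambertW_Qinv r_pos by simp

lemma Qinv_0: "Qinv 0 = 0"
  by (simp add: Qinv_def)

lemma Qinv_has_real_derivative: "(Qinv has_real_derivative qs s) (at s)"
  unfolding Qinv_def qs_def mu_def
  using alpha_pos beta_pos r_pos by (auto intro!: derivative_eq_intros simp: field_simps)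

lemma qs_pos: "0 < s \<Longrightarrow> 0 < qs s"
  using alpha_pos beta_pos r_pos by (simp add: qs_def)

lemma continuous_on_Qinv [continuous_intros]:
  "continuous_on S f \<Longrightarrow> continuous_on S (\<lambda>x. Qinv (f x))"
  unfolding Qinv_def using mu_pos by (intro continuous_intros) auto

lemma strict_mono_on_Qinv: "strict_mono_on {0..} Qinv"
proof (rule strict_mono_onI)
  fix a b :: real assume "a \<in> {0..}" "b \<in> {0..}" "a < b"
  show "Qinv a < Qinv b"
  proof (rule DERIV_pos_imp_increasing_open[OF \<open>a < b\<close> _ continuous_on_Qinv[OF continuous_on_id]])
    fix x assume "a < x" "x < b"
    with \<open>a \<in> {0..}\<close> show "\<exists>y. (Qinv has_real_derivative y) (at x) \<and> 0 < y"
      using Qinv_has_real_derivative qs_pos by (intro exI[of _ "qs x"]) auto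
  qed
qed

lemma Qinv_nonneg: "0 \<le> s \<Longrightarrow> 0 \<le> Qinv s"
  using strict_mono_on_leD[OF strict_mono_on_Qinv, of 0 s] by (simp add: Qinv_0)

lemma Qinv_pos: "0 < s \<Longrightarrow> 0 < Qinv s"
  using strict_mono_onD[OF strict_mono_on_Qinv, of 0 s] by (simp add: Qinv_0)

lemma Qinv_surj:
  assumes "0 \<le> x"
  obtains s where "0 \<le> s" "Qinv s = x"
proof -
  define s0 where "s0 = (x * mu \<alpha> \<beta> r + 1) / r"
  have "0 \<le> s0" and "r * s0 = x * mu \<alpha> \<beta> r + 1"
    using assms mu_pos r_pos by (simp_all add: s0_def)
  then have "x \<le> Qinv s0"
    using mu_pos by (simp add: Qinv_def field_simps)
  with \<open>0 \<le> s0\<close> assms show thesis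
    using IVT'[of Qinv 0 x s0] Qinv_0 continuous_on_Qinv[OF continuous_on_id] that by auto
qed

lemma Qinv_Q: "0 \<le> x \<Longrightarrow> Qinv (Q x) = x"
  by (metis Q_Qinv Qinv_surj)

lemma Q_nonneg: "0 \<le> x \<Longrightarrow> 0 \<le> Q x"
  by (metis Q_Qinv Qinv_surj)

lemma Q_0: "Q 0 = 0"
  using Q_Qinv[of 0] by (simp add: Qinv_0)

lemma Q_less_iff: "0 \<le> x \<Longrightarrow> 0 \<le> y \<Longrightarrow> Q x < Q y \<longleftrightarrow> x < y"
  using strict_mono_on_less[OF strict_mono_on_Qinv] Q_nonneg Qinv_Q by (metis atLeast_iff)

lemma Q_pos: "0 < x \<Longrightarrow> 0 < Q x"
  using Q_less_iff[of 0 x] Q_0 by simp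

lemma q_eq_qs_Q: "0 \<le> x \<Longrightarrow> q x = qs (Q x)"
  by (metis Q_nonneg Qinv_Q lambertW_Qinv qfun_def qs_def diff_conv_add_uminus)

lemma q_Qinv: "0 \<le> s \<Longrightarrow> q (Qinv s) = qs s"
  by (simp add: q_eq_qs_Q Qinv_nonneg Q_Qinv)

lemma q_pos: "0 < x \<Longrightarrow> 0 < q x"
  by (simp add: q_eq_qs_Q Q_pos qs_pos)

lemma continuous_on_Q: "continuous_on {0..} Q"
proof (rule continuous_on_atLeast)
  fix b :: real assume "0 \<le> b"
  have "continuous_on (Qinv ` {0..Q b}) Q"
    by (rule continuous_on_inv) (auto simp: continuous_on_Qinv[OF continuous_on_id] Q_Qinv)
  moreover have "{0..b} \<subseteq> Qinv ` {0..Q b}"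
  proof
    fix x assume "x \<in> {0..b}"
    then have "Q x \<in> {0..Q b}" and "x = Qinv (Q x)"
      using Q_less_iff[of b x] Q_nonneg Qinv_Q by (auto simp: not_less[symmetric])
    then show "x \<in> Qinv ` {0..Q b}" by blast
  qed
  ultimately show "continuous_on {0..b} Q"
    by (rule continuous_on_subset)
qed

lemma Q_has_real_derivative:
  assumes "0 < x"
  shows "(Q has_real_derivative 1 / q x) (at x)"
proof -
  have "continuous_on {0<..} Q"
    by (rule continuous_on_subset[OF continuous_on_Q]) auto
  then have "isCont Q x"
    using assms by (simp add: continuous_on_eq_continuous_at)
  then have "(Q has_real_derivative inverse (qs (Q x))) (at x)"
    using Qinv_has_real_derivative qs_pos[OF Q_pos[OF assms]] assms Qinv_Q
    by (intro DERIV_inverse_function[where a = 0 and b = "x + 1"]) auto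
  then show ?thesis
    using assms by (simp add: q_eq_qs_Q inverse_eq_divide)
qed

lemma qs_has_real_derivative: "(qs has_real_derivative r * (\<alpha> / (2 * \<beta>) - qs s)) (at s)"
  unfolding qs_def using beta_pos by (auto intro!: derivative_eq_intros simp: field_simps)

lemma vM_eq_q_square: "vM \<alpha> \<beta> r x = \<beta> / r * (q x)\<^sup>2"
  using beta_pos r_pos by (simp add: vM_def qfun_def field_simps power2_eq_square)

lemma vM_has_real_derivative:
  assumes "0 < x"
  shows "(vM \<alpha> \<beta> r has_real_derivative \<alpha> - 2 * \<beta> * q x) (at x)"
proof (rule has_field_derivative_transform_within_open)
  have "((\<lambda>y. qs (Q y)) has_real_derivative r * (\<alpha> / (2 * \<beta>) - q x) / q x) (at x)"
    using DERIV_chain2[OF qs_has_real_derivative Q_has_real_derivative[OF assms]] assms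
    by (simp add: q_eq_qs_Q)
  then have "((\<lambda>y. \<beta> / r * (qs (Q y))\<^sup>2) has_real_derivative
      \<beta> / r * (2 * qs (Q x) * (r * (\<alpha> / (2 * \<beta>) - q x) / q x))) (at x)"
    by (auto intro!: derivative_eq_intros)
  moreover have "\<beta> / r * (2 * qs (Q x) * (r * (\<alpha> / (2 * \<beta>) - q x) / q x)) = \<alpha> - 2 * \<beta> * q x"
    using assms q_pos[OF assms] beta_pos r_pos by (simp add: q_eq_qs_Q[symmetric] field_simps)
  ultimately show "((\<lambda>y. \<beta> / r * (qs (Q y))\<^sup>2) has_real_derivative \<alpha> - 2 * \<beta> * q x) (at x)"
    by simp
  fix y :: real assume "y \<in> {0<..}"
  then show "\<beta> / r * (qs (Q y))\<^sup>2 = vM \<alpha> \<beta> r y"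
    by (simp add: vM_eq_q_square q_eq_qs_Q)
qed (use assms in auto)

lemma Q_has_integral:
  assumes "0 \<le> x"
  shows "((\<lambda>u. 1 / q u) has_integral Q x) {0..x}"
proof -
  have "((\<lambda>u. 1 / q u) has_integral Q x - Q 0) {0..x}"
  proof (rule fundamental_theorem_of_calculus_interior[OF assms])
    show "continuous_on {0..x} Q"
      using continuous_on_Q by (rule continuous_on_subset) auto
    fix y assume "y \<in> {0<..<x}"
    then show "(Q has_vector_derivative 1 / q y) (at y)"
      using Q_has_real_derivative has_real_derivative_iff_has_vector_derivative by auto
  qed
  then show ?thesis by (simp add: Q_0)
qed

abbreviation "B \<equiv> v1_branch \<alpha> \<beta> r"

definition B_da :: "real \<Rightarrow> real \<Rightarrow> real" where
  "B_da a b = \<alpha>\<^sup>2 / (4 * \<beta>\<^sup>2 * r) * (r * exp (- r * a) * (1 - r * b) - r * exp (- r * (a + b)))"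

definition B_db :: "real \<Rightarrow> real \<Rightarrow> real" where
  "B_db a b = \<alpha>\<^sup>2 / (4 * \<beta>\<^sup>2 * r) * (r * exp (- r * a) - r\<^sup>2 * b * exp (- r * b) - r * exp (- r * (a + b)))"

lemma B_has_derivative [derivative_intros]:
  assumes "(f has_derivative f') (at x within S)" and "(g has_derivative g') (at x within S)"
  shows "((\<lambda>x. B (f x) (g x)) has_derivative
           (\<lambda>h. B_da (f x) (g x) * f' h + B_db (f x) (g x) * g' h)) (at x within S)"
  unfolding v1_branch_def
  by (rule derivative_eq_intros refl assms)+
     (use beta_pos r_pos in \<open>simp add: fun_eq_iff B_da_def B_db_def field_simps power2_eq_square\<close>)

lemma B_transport_eq: "B_da a b + B_db a b + r * B a b = - qs a * qs b"
proof -
  have "exp (- r * (a + b)) = exp (- r * a) * exp (- r * b)"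
    by (simp add: exp_add[symmetric] algebra_simps)
  then show ?thesis
    using alpha_pos beta_pos r_pos
    by (simp add: B_da_def B_db_def v1_branch_def qs_def field_simps power2_eq_square)
qed

lemma B_da_diagonal: "B_da a a = B_db a a"
  by (simp add: B_da_def B_db_def algebra_simps power2_eq_square)

lemma B_boundary: "B a 0 = 0"
  by (simp add: v1_branch_def)

definition B_sym :: "real \<times> real \<Rightarrow> real" where
  "B_sym p = (if snd p < fst p then B (fst p) (snd p) else B (snd p) (fst p))"

definition B_sym_da :: "real \<times> real \<Rightarrow> real" where
  "B_sym_da p = (if snd p < fst p then B_da (fst p) (snd p) else B_db (snd p) (fst p))"

definition B_sym_db :: "real \<times> real \<Rightarrow> real" where
  "B_sym_db p = (if snd p < fst p then B_db (fst p) (snd p) else B_da (snd p) (fst p))"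

lemma B_sym_has_derivative:
  "(B_sym has_derivative (\<lambda>h. B_sym_da p * fst h + B_sym_db p * snd h)) (at p)"
proof -
  let ?S = "{p :: real \<times> real. snd p < fst p}" and ?T = "{p :: real \<times> real. fst p \<le> snd p}"
  have "closure ?S \<subseteq> {p. snd p \<le> fst p}"
    by (intro closure_minimal closed_Collect_le continuous_intros) auto
  moreover have "closure ?T = ?T"
    by (intro closure_closed closed_Collect_le continuous_intros)
  ultimately have diagonal: "fst p = snd p" if "p \<in> closure ?S" "p \<in> closure ?T" for p
    using that by force
  have "((\<lambda>p. if p \<in> ?S then B (fst p) (snd p) else B (snd p) (fst p)) has_derivative
      (if p \<in> ?S then (\<lambda>h. B_da (fst p) (snd p) * fst h + B_db (fst p) (snd p) * snd h)
       else (\<lambda>h. B_db (snd p) (fst p) * fst h + B_da (snd p) (fst p) * snd h)))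
      (at p within ?S \<union> ?T)"
    by (rule has_derivative_If_within_closures)
       (auto intro!: derivative_eq_intros simp: algebra_simps B_da_diagonal dest!: diagonal)
  moreover have "?S \<union> ?T = UNIV" by auto
  moreover have "B_sym = (\<lambda>p. if p \<in> ?S then B (fst p) (snd p) else B (snd p) (fst p))"
    by (simp add: fun_eq_iff B_sym_def)
  ultimately show ?thesis
    by (cases "snd p < fst p") (simp_all add: B_sym_da_def B_sym_db_def)
qed

lemma B_sym_boundary: "0 \<le> a \<Longrightarrow> B_sym (a, 0) = 0 \<and> B_sym (0, a) = 0"
  by (cases "a = 0") (simp_all add: B_sym_def B_boundary)

lemma B_sym_transport_eq: "B_sym_da p + B_sym_db p + r * B_sym p = - qs (fst p) * qs (snd p)"
  using B_transport_eq[of "fst p" "snd p"] B_transport_eq[of "snd p" "fst p"]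
  by (simp add: B_sym_def B_sym_da_def B_sym_db_def algebra_simps)

lemma v1_formula_eq_B_sym:
  "0 \<le> x1 \<Longrightarrow> 0 \<le> x2 \<Longrightarrow> v1_formula \<alpha> \<beta> r (x1, x2) = B_sym (Q x1, Q x2)"
  by (simp add: v1_formula_def B_sym_def Q_less_iff)

lemma continuous_on_v1_formula:
  "continuous_on {p. 0 \<le> fst p \<and> 0 \<le> snd p} (v1_formula \<alpha> \<beta> r)"
proof (rule continuous_on_eq)
  have "continuous_on UNIV B_sym"
    using B_sym_has_derivative has_derivative_continuous continuous_at_imp_continuous_on by blast
  moreover have "continuous_on {p. 0 \<le> fst p \<and> 0 \<le> snd p} (\<lambda>p. (Q (fst p), Q (snd p)))"
    by (intro continuous_intros continuous_on_compose2[OF continuous_on_Q]) auto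
  ultimately show "continuous_on {p. 0 \<le> fst p \<and> 0 \<le> snd p} (\<lambda>p. B_sym (Q (fst p), Q (snd p)))"
    by (rule continuous_on_compose2) auto
qed (auto simp: v1_formula_eq_B_sym)

lemma v1_formula_has_derivative:
  assumes "0 < x1" and "0 < x2"
  shows "(v1_formula \<alpha> \<beta> r has_derivative
           (\<lambda>h. B_sym_da (Q x1, Q x2) * (fst h / q x1) + B_sym_db (Q x1, Q x2) * (snd h / q x2)))
         (at (x1, x2))"
proof (rule has_derivative_transform_within_open)
  have "((\<lambda>p. (Q (fst p), Q (snd p))) has_derivative (\<lambda>h. (fst h / q x1, snd h / q x2))) (at (x1, x2))"
    using DERIV_compose_FDERIV[of Q "1 / q x1" fst "(x1, x2)" fst]
      DERIV_compose_FDERIV[of Q "1 / q x2" snd "(x1, x2)" snd]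
      Q_has_real_derivative assms bounded_linear_fst bounded_linear_snd
    by (auto intro!: has_derivative_Pair bounded_linear_imp_has_derivative)
  from has_derivative_compose[OF this B_sym_has_derivative]
  show "((\<lambda>p. B_sym (Q (fst p), Q (snd p))) has_derivative
           (\<lambda>h. B_sym_da (Q x1, Q x2) * (fst h / q x1) + B_sym_db (Q x1, Q x2) * (snd h / q x2)))
         (at (x1, x2))" by simp
  show "open {p :: real \<times> real. 0 < fst p \<and> 0 < snd p}"
    by (intro open_Collect_conj open_Collect_less continuous_intros)
qed (use assms in \<open>auto simp: v1_formula_eq_B_sym\<close>)

lemma solves_pde_v1_formula: "solves_pde q r (v1_formula \<alpha> \<beta> r)"
  unfolding solves_pde_def
proof (intro conjI allI impI continuous_on_v1_formula)
  fix x1 x2 :: real assume "0 < x1" "0 < x2"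
  then have "q x1 * (B_sym_da (Q x1, Q x2) * (1 / q x1)) + q x2 * (B_sym_db (Q x1, Q x2) * (1 / q x2))
      + r * v1_formula \<alpha> \<beta> r (x1, x2) = - q x1 * q x2"
    using B_sym_transport_eq[of "(Q x1, Q x2)"] q_pos[of x1] q_pos[of x2]
    by (simp add: v1_formula_eq_B_sym q_eq_qs_Q)
  with v1_formula_has_derivative[OF \<open>0 < x1\<close> \<open>0 < x2\<close>]
  show "\<exists>D. (v1_formula \<alpha> \<beta> r has_derivative D) (at (x1, x2)) \<and>
      q x1 * D (1, 0) + q x2 * D (0, 1) + r * v1_formula \<alpha> \<beta> r (x1, x2) = - q x1 * q x2"
    by fastforce
qed (simp_all add: v1_formula_eq_B_sym Q_0 Q_nonneg B_sym_boundary)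

lemma solves_pde_along_characteristic:
  assumes "solves_pde q r v" and "0 < c1 + t" and "0 < c2 + t"
  shows "((\<lambda>t. v (Qinv (c1 + t), Qinv (c2 + t))) has_real_derivative
           - q (Qinv (c1 + t)) * q (Qinv (c2 + t)) - r * v (Qinv (c1 + t), Qinv (c2 + t))) (at t)"
proof -
  obtain D where D: "(v has_derivative D) (at (Qinv (c1 + t), Qinv (c2 + t)))"
    and pde: "q (Qinv (c1 + t)) * D (1, 0) + q (Qinv (c2 + t)) * D (0, 1)
              + r * v (Qinv (c1 + t), Qinv (c2 + t)) = - q (Qinv (c1 + t)) * q (Qinv (c2 + t))"
    using assms Qinv_pos unfolding solves_pde_def by blast
  have "((\<lambda>t. Qinv (c + t)) has_real_derivative q (Qinv (c + t))) (at t)" if "0 < c + t" for c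
  proof -
    have "((\<lambda>t. c + t) has_real_derivative 1) (at t)"
      by (auto intro!: derivative_eq_intros)
    from DERIV_chain2[OF Qinv_has_real_derivative this] that show ?thesis
      by (simp add: q_Qinv)
  qed
  then have "((\<lambda>t. v (Qinv (c1 + t), Qinv (c2 + t))) has_real_derivative
      q (Qinv (c1 + t)) * D (1, 0) + q (Qinv (c2 + t)) * D (0, 1)) (at t)"
    using assms(2,3) D
    by (intro has_real_derivative_compose_pair[where f = "\<lambda>t. Qinv (c1 + t)" and g = "\<lambda>t. Qinv (c2 + t)"])
       simp_all
  then show ?thesis
    by (rule DERIV_cong) (use pde in linarith)
qed

lemma solves_pde_unique:
  assumes v: "solves_pde q r v" and w: "solves_pde q r w" and "0 \<le> x1" and "0 \<le> x2"
  shows "v (x1, x2) = w (x1, x2)"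
proof (cases "x1 = 0 \<or> x2 = 0")
  case True
  then show ?thesis using assms unfolding solves_pde_def by auto
next
  case False
  with assms have "0 < x1" "0 < x2" by auto
  \<comment> \<open>The characteristic through (x1, x2) starts on an axis at time 0 and reaches (x1, x2) at time m.\<close>
  define m where "m = min (Q x1) (Q x2)"
  define c1 where "c1 = Q x1 - m"
  define c2 where "c2 = Q x2 - m"
  define \<gamma> where "\<gamma> t = (Qinv (c1 + t), Qinv (c2 + t))" for t
  have "0 < m"
    using Q_pos[OF \<open>0 < x1\<close>] Q_pos[OF \<open>0 < x2\<close>] by (simp add: m_def)
  have "0 \<le> c1" "0 \<le> c2" "c1 = 0 \<or> c2 = 0"
    by (auto simp: c1_def c2_def m_def min_def)
  have "v (\<gamma> m) - w (\<gamma> m) = 0"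
  proof (rule linear_ode_zero[where f = "\<lambda>t. v (\<gamma> t) - w (\<gamma> t)" and c = "- r"])
    have "\<gamma> ` {0..m} \<subseteq> {p. 0 \<le> fst p \<and> 0 \<le> snd p}"
      using \<open>0 \<le> c1\<close> \<open>0 \<le> c2\<close> by (auto simp: \<gamma>_def intro!: Qinv_nonneg)
    moreover have "continuous_on {0..m} \<gamma>"
      unfolding \<gamma>_def by (intro continuous_intros)
    ultimately have "continuous_on {0..m} (\<lambda>t. u (\<gamma> t))"
      if "continuous_on {p. 0 \<le> fst p \<and> 0 \<le> snd p} u" for u
      using continuous_on_compose2[OF that] by blast
    with v w show "continuous_on {0..m} (\<lambda>t. v (\<gamma> t) - w (\<gamma> t))"
      unfolding solves_pde_def by (intro continuous_on_diff) blast+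
    show "v (\<gamma> 0) - w (\<gamma> 0) = 0"
      using \<open>c1 = 0 \<or> c2 = 0\<close> \<open>0 \<le> c1\<close> \<open>0 \<le> c2\<close> v w Qinv_nonneg
      by (auto simp: \<gamma>_def solves_pde_def Qinv_0)
    fix t assume "0 < t" "t < m"
    with \<open>0 \<le> c1\<close> \<open>0 \<le> c2\<close> have "0 < c1 + t" "0 < c2 + t" by auto
    from DERIV_diff[OF solves_pde_along_characteristic[OF v this] solves_pde_along_characteristic[OF w this]]
    show "((\<lambda>t. v (\<gamma> t) - w (\<gamma> t)) has_real_derivative - r * (v (\<gamma> t) - w (\<gamma> t))) (at t)"
      unfolding \<gamma>_def by (rule DERIV_cong) (simp add: algebra_simps)
  qed (use \<open>0 < m\<close> in simp)
  moreover have "\<gamma> m = (x1, x2)"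
    using \<open>0 < x1\<close> \<open>0 < x2\<close> by (simp add: \<gamma>_def c1_def c2_def Qinv_Q)
  ultimately show ?thesis by simp
qed

end

theorem proposition3p2:
  fixes \<alpha> \<beta> r :: real
  assumes "\<alpha> > 0" and "\<beta> > 0" and "r > 0"
  shows "(\<forall>x>0. (vM \<alpha> \<beta> r has_real_derivative (\<alpha> - 2 * \<beta> * qfun \<alpha> \<beta> r x)) (at x))
     \<and> (\<forall>x\<ge>0. ((\<lambda>u. 1 / qfun \<alpha> \<beta> r u) has_integral Qfun \<alpha> \<beta> r x) {0..x})
     \<and> solves_pde (qfun \<alpha> \<beta> r) r (v1_formula \<alpha> \<beta> r)
     \<and> (\<forall>v. solves_pde (qfun \<alpha> \<beta> r) r v \<longrightarrow>
           (\<forall>x1\<ge>0. \<forall>x2\<ge>0. v (x1, x2) = v1_formula \<alpha> \<beta> r (x1, x2)))"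
proof -
  interpret bertrand_duopoly \<alpha> \<beta> r
    using assms by unfold_locales
  show ?thesis
    using vM_has_real_derivative Q_has_integral solves_pde_v1_formula
      solves_pde_unique[OF _ solves_pde_v1_formula] by blast
qed

end
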